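(* Assume $(d,q)=(2,2)$. The third-order term of the Taylor expansion of $f(\bm{x})$ around the mode $\bm{x}=\bm{\theta}$ is either: (i) $0$ identically, in which case the asymptotic bias (AB) is equal to zero with an arbitrary $\mathrm{Q}$; (ii) of the form $\prod_{i=1}^3\bm{a}_i^\top(\bm{x}-\bm{\theta})$ with $\bm{a}_1,\bm{a}_2,\bm{a}_3$, any two of which are linearly independent, in which case there is a choice of $\mathrm{Q}$ with which the AB is equal to zero; (iii) neither identically $0$ nor of the form described in (ii), in which case the AB cannot be made equal to zero by any choice of $\mathrm{Q}$.
   Context: Let $f$ be a probability density function on $\mathbb{R}^d$ with unique mode $\bm{\theta}$ and non-singular Hessian $Hf(\bm{\theta})$, and let $\mathrm{A}=\{Hf(\bm{\theta})\}^{-1}$. The kernel mode estimator $\bm{\theta}_n$ (maximizer of a kernel density estimate with bandwidth $h_n$) uses an elliptic kernel $K_\mathrm{P}(\bm{x})=K(\mathrm{P}\bm{x})$, where $K(\cdot)=G(\|\cdot\|)$ is a $q$-th order radial-basis kernel and $\mathrm{P}$ is a $d\times d$ matrix with $|\det\mathrm{P}|=1$; let $\mathrm{Q}=\mathrm{P}^{-1}\mathrm{P}^{-\top}$ (positive definite). The asymptotic bias (AB) of $\bm{\theta}_n$ is $\mathrm{E}[\bm{\theta}_n-\bm{\theta}]\approx -\frac{\pi^{d/2}h_n^q}{2^{q-1}\Gamma(\frac{d+q}{2})\Gamma(\frac{q}{2}+1)}B_{d,q}(G)\,\mathrm{A}\,\nabla(\nabla^\top\mathrm{Q}\nabla)^{q/2}f(\bm{\theta})$,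 with $B_{d,q}(G)=\int_0^\infty x^{d-1+q}G(x)\,dx\neq 0$, so the AB vanishes iff $\nabla(\nabla^\top\mathrm{Q}\nabla)^{q/2}f(\bm{\theta})=\bm{0}_d$. *)

theory Defs
  imports "HOL-Analysis.Analysis"
begin

definition partial :: "2 \<Rightarrow> (real^2 \<Rightarrow> real) \<Rightarrow> real^2 \<Rightarrow> real" where
  "partial i g x = deriv (\<lambda>t. g (x + t *\<^sub>R axis i 1)) 0"

definition C1 :: "(real^2 \<Rightarrow> real) \<Rightarrow> bool" where
  "C1 g \<longleftrightarrow> continuous_on UNIV g \<and>
     (\<forall>i x. (\<lambda>t. g (x + t *\<^sub>R axis i 1)) differentiable (at 0)) \<and>
     (\<forall>i. continuous_on UNIV (partial i g))"

definition C3 :: "(real^2 \<Rightarrow> real) \<Rightarrow> bool" where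
  "C3 g \<longleftrightarrow> C1 g \<and> (\<forall>i. C1 (partial i g)) \<and> (\<forall>i j. C1 (partial i (partial j g)))"

definition hess :: "(real^2 \<Rightarrow> real) \<Rightarrow> real^2 \<Rightarrow> real^2^2" where
  "hess g x = (\<chi> i j. partial i (partial j g) x)"

definition taylor3 :: "(real^2 \<Rightarrow> real) \<Rightarrow> real^2 \<Rightarrow> real^2 \<Rightarrow> real" where
  "taylor3 g th x = (1/6) * (\<Sum>i\<in>UNIV. \<Sum>j\<in>UNIV. \<Sum>k\<in>UNIV.
      partial i (partial j (partial k g)) th * (x - th)$i * (x - th)$j * (x - th)$k)"

definition Qmat :: "real^2^2 \<Rightarrow> real^2^2" where
  "Qmat P = matrix_inv P ** transpose (matrix_inv P)"

text \<open>The vector nabla (nabla^T Q nabla)^{q/2} f (th) for q = 2.\<close>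
definition grad_QLap :: "real^2^2 \<Rightarrow> (real^2 \<Rightarrow> real) \<Rightarrow> real^2 \<Rightarrow> real^2" where
  "grad_QLap Q g th = (\<chi> k. \<Sum>i\<in>UNIV. \<Sum>j\<in>UNIV. Q$i$j * partial k (partial i (partial j g)) th)"

definition Bdq :: "nat \<Rightarrow> nat \<Rightarrow> (real \<Rightarrow> real) \<Rightarrow> real" where
  "Bdq d q G = integral {0..} (\<lambda>x. x ^ (d - 1 + q) * G x)"

text \<open>Asymptotic bias of the kernel mode estimator for (d,q) = (2,2),
  bandwidth h, radial profile G and kernel matrix P.\<close>
definition AB :: "(real^2 \<Rightarrow> real) \<Rightarrow> real^2 \<Rightarrow> (real \<Rightarrow> real) \<Rightarrow> real \<Rightarrow> real^2^2 \<Rightarrow> real^2" where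
  "AB f th G h P =
     (let d = (2::nat); q = (2::nat);
          c = - (pi powr (real d / 2) * h ^ q /
                 (2 powr (real q - 1) * Gamma ((real d + real q) / 2) * Gamma (real q / 2 + 1)))
     in (c * Bdq d q G) *\<^sub>R (matrix_inv (hess f th) *v grad_QLap (Qmat P) f th))"

definition lin_indep2 :: "real^2 \<Rightarrow> real^2 \<Rightarrow> bool" where
  "lin_indep2 a b \<longleftrightarrow> a \<noteq> b \<and> independent {a, b}"

end

theory Submission
  imports Defs
begin

text \<open>The third-order Taylor term is a binary cubic whose coefficients are the third partials
  of \<open>f\<close> at the mode, and the bias vanishes exactly when this cubic is harmonic for the operator
  \<open>\<nabla>\<^sup>T Q \<nabla>\<close>. A positive definite \<open>Q\<close> of determinant one with this property exists iff the cubic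
  has three pairwise independent real linear factors: the Hessian covariant of any cubic satisfies
  the harmonicity equations and is definite in that case; conversely, after the linear change of
  variables turning \<open>Q\<close> into the identity, a harmonic cubic is the real part of
  \<open>(A + i D) (z\<^sub>1 + i z\<^sub>2)\<^sup>3\<close>, which splits over the three cube roots of \<open>A + i D\<close>.\<close>

definition dir_deriv :: "'a::real_normed_vector \<Rightarrow> ('a \<Rightarrow> real) \<Rightarrow> 'a \<Rightarrow> real" where
  "dir_deriv v g x = deriv (\<lambda>t. g (x + t *\<^sub>R v)) 0"

lemma partial_eq_dir_deriv: "partial i = dir_deriv (axis i 1)"
  by (intro ext) (simp add: partial_def dir_deriv_def)

lemma has_real_derivative_dir_deriv:
  assumes "\<forall>y. (\<lambda>t. g (y + t *\<^sub>R v)) differentiable (at 0)"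
  shows "((\<lambda>t. g (x + t *\<^sub>R v)) has_real_derivative dir_deriv v g (x + s *\<^sub>R v)) (at s)"
proof -
  have "((\<lambda>t. g ((x + s *\<^sub>R v) + t *\<^sub>R v)) has_real_derivative dir_deriv v g (x + s *\<^sub>R v)) (at 0)"
    using assms DERIV_deriv_iff_real_differentiable unfolding dir_deriv_def by blast
  then have "((\<lambda>t. g (x + (t + s) *\<^sub>R v)) has_real_derivative dir_deriv v g (x + s *\<^sub>R v)) (at 0)"
    by (simp add: scaleR_add_left algebra_simps)
  then show ?thesis
    using DERIV_shift[of "\<lambda>t. g (x + t *\<^sub>R v)" _ 0 s] by simp
qed

text \<open>Two applications of the mean value theorem, first along \<open>u\<close>, then along \<open>v\<close>.\<close>

lemma second_difference_eq_dir_deriv2: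
  assumes du: "\<forall>y. (\<lambda>t. g (y + t *\<^sub>R u)) differentiable (at 0)"
    and duv: "\<forall>y. (\<lambda>t. dir_deriv u g (y + t *\<^sub>R v)) differentiable (at 0)"
    and s: "0 < s"
  obtains y where "norm (y - x) \<le> s * (norm u + norm v)"
    and "g (x + s *\<^sub>R u + s *\<^sub>R v) - g (x + s *\<^sub>R u) - g (x + s *\<^sub>R v) + g x
           = s\<^sup>2 * dir_deriv v (dir_deriv u g) y"
proof -
  define \<phi> where "\<phi> \<sigma> = g ((x + s *\<^sub>R v) + \<sigma> *\<^sub>R u) - g (x + \<sigma> *\<^sub>R u)" for \<sigma>
  have "(\<phi> has_real_derivative
          dir_deriv u g ((x + s *\<^sub>R v) + \<sigma> *\<^sub>R u) - dir_deriv u g (x + \<sigma> *\<^sub>R u)) (at \<sigma>)" for \<sigma>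
    unfolding \<phi>_def by (intro DERIV_diff has_real_derivative_dir_deriv[OF du])
  from MVT2[OF s this] obtain \<sigma> where \<sigma>: "0 < \<sigma>" "\<sigma> < s"
    and \<phi>_diff: "\<phi> s - \<phi> 0 = (s - 0) *
      (dir_deriv u g ((x + s *\<^sub>R v) + \<sigma> *\<^sub>R u) - dir_deriv u g (x + \<sigma> *\<^sub>R u))"
    by blast
  define \<psi> where "\<psi> \<tau> = dir_deriv u g ((x + \<sigma> *\<^sub>R u) + \<tau> *\<^sub>R v)" for \<tau>
  have "(\<psi> has_real_derivative dir_deriv v (dir_deriv u g) ((x + \<sigma> *\<^sub>R u) + \<tau> *\<^sub>R v)) (at \<tau>)" for \<tau>
    unfolding \<psi>_def by (rule has_real_derivative_dir_deriv[OF duv])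
  from MVT2[OF s this] obtain \<tau> where \<tau>: "0 < \<tau>" "\<tau> < s"
    and \<psi>_diff: "\<psi> s - \<psi> 0 = (s - 0) * dir_deriv v (dir_deriv u g) ((x + \<sigma> *\<^sub>R u) + \<tau> *\<^sub>R v)"
    by blast
  define y where "y = (x + \<sigma> *\<^sub>R u) + \<tau> *\<^sub>R v"
  have "norm (y - x) \<le> \<sigma> * norm u + \<tau> * norm v"
    using norm_triangle_ineq[of "\<sigma> *\<^sub>R u" "\<tau> *\<^sub>R v"] \<sigma> \<tau> unfolding y_def by simp
  also have "\<dots> \<le> s * (norm u + norm v)"
    using \<sigma> \<tau> by (simp add: distrib_left add_mono mult_right_mono)
  finally have "norm (y - x) \<le> s * (norm u + norm v)" .
  moreover have "g (x + s *\<^sub>R u + s *\<^sub>R v) - g (x + s *\<^sub>R u) - g (x + s *\<^sub>R v) + g x = \<phi> s - \<phi> 0"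
    unfolding \<phi>_def by (simp add: algebra_simps)
  moreover have "\<phi> s - \<phi> 0 = s\<^sup>2 * dir_deriv v (dir_deriv u g) y"
    using \<phi>_diff \<psi>_diff unfolding \<psi>_def y_def by (simp add: power2_eq_square algebra_simps)
  ultimately show thesis using that by simp
qed

text \<open>Schwarz's theorem: the symmetric second difference is, up to \<open>s\<^sup>2\<close>, a value of either
  mixed derivative near \<open>x\<close>, so by continuity the two mixed derivatives agree at \<open>x\<close>.\<close>

lemma dir_deriv_commute:
  assumes du: "\<forall>y. (\<lambda>t. g (y + t *\<^sub>R u)) differentiable (at 0)"
    and dv: "\<forall>y. (\<lambda>t. g (y + t *\<^sub>R v)) differentiable (at 0)"
    and duv: "\<forall>y. (\<lambda>t. dir_deriv u g (y + t *\<^sub>R v)) differentiable (at 0)"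
    and dvu: "\<forall>y. (\<lambda>t. dir_deriv v g (y + t *\<^sub>R u)) differentiable (at 0)"
    and cont_uv: "continuous_on UNIV (dir_deriv v (dir_deriv u g))"
    and cont_vu: "continuous_on UNIV (dir_deriv u (dir_deriv v g))"
  shows "dir_deriv v (dir_deriv u g) x = dir_deriv u (dir_deriv v g) x"
proof (rule ccontr)
  define A where "A = dir_deriv v (dir_deriv u g) x"
  define B where "B = dir_deriv u (dir_deriv v g) x"
  assume "dir_deriv v (dir_deriv u g) x \<noteq> dir_deriv u (dir_deriv v g) x"
  then have e: "\<bar>A - B\<bar> / 2 > 0" unfolding A_def B_def by simp
  obtain d1 where d1: "d1 > 0" "\<And>y. dist y x < d1 \<Longrightarrow> dist (dir_deriv v (dir_deriv u g) y) A < \<bar>A - B\<bar> / 2"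
    using cont_uv e unfolding continuous_on_iff A_def by blast
  obtain d2 where d2: "d2 > 0" "\<And>y. dist y x < d2 \<Longrightarrow> dist (dir_deriv u (dir_deriv v g) y) B < \<bar>A - B\<bar> / 2"
    using cont_vu e unfolding continuous_on_iff B_def by blast
  define K where "K = norm u + norm v + 1"
  define s where "s = min d1 d2 / (2 * K)"
  have K: "K > 0" unfolding K_def by (simp add: add_nonneg_pos)
  have s: "s > 0" unfolding s_def using d1 d2 K by simp
  have "s * (norm u + norm v) < s * K" using s unfolding K_def by simp
  also have "s * K < min d1 d2" unfolding s_def using d1 d2 K by (simp add: min_def)
  finally have close: "s * (norm u + norm v) < min d1 d2" .
  obtain y1 where y1: "norm (y1 - x) \<le> s * (norm u + norm v)"
    "g (x + s *\<^sub>R u + s *\<^sub>R v) - g (x + s *\<^sub>R u) - g (x + s *\<^sub>R v) + g x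
       = s\<^sup>2 * dir_deriv v (dir_deriv u g) y1"
    using second_difference_eq_dir_deriv2[OF du duv s] by blast
  obtain y2 where y2: "norm (y2 - x) \<le> s * (norm v + norm u)"
    "g (x + s *\<^sub>R v + s *\<^sub>R u) - g (x + s *\<^sub>R v) - g (x + s *\<^sub>R u) + g x
       = s\<^sup>2 * dir_deriv u (dir_deriv v g) y2"
    using second_difference_eq_dir_deriv2[OF dv dvu s] by blast
  have "dir_deriv v (dir_deriv u g) y1 = dir_deriv u (dir_deriv v g) y2"
    using y1(2) y2(2) s by (simp add: algebra_simps)
  moreover have "\<bar>dir_deriv v (dir_deriv u g) y1 - A\<bar> < \<bar>A - B\<bar> / 2"
    using d1(2)[of y1] y1(1) close by (simp add: dist_norm dist_real_def)
  moreover have "\<bar>dir_deriv u (dir_deriv v g) y2 - B\<bar> < \<bar>A - B\<bar> / 2"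
    using d2(2)[of y2] y2(1) close by (simp add: dist_norm dist_real_def add.commute)
  ultimately show False by (simp add: abs_if split: if_splits)
qed

lemma partial_commute:
  assumes "C1 g" "C1 (partial i g)" "C1 (partial j g)"
  shows "partial j (partial i g) = partial i (partial j g)"
proof
  fix x
  show "partial j (partial i g) x = partial i (partial j g) x"
    using assms unfolding C1_def partial_eq_dir_deriv by (intro dir_deriv_commute) auto
qed

lemma C3_partial2_commute:
  assumes "C3 f"
  shows "partial i (partial j f) = partial j (partial i f)"
  using assms unfolding C3_def by (intro partial_commute) auto

lemma C3_partial3_commute:
  assumes "C3 f"
  shows "partial i (partial j (partial k f)) = partial j (partial i (partial k f))"
    and "partial i (partial j (partial k f)) = partial i (partial k (partial j f))"
proof -
  show "partial i (partial j (partial k f)) = partial j (partial i (partial k f))"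
    using assms unfolding C3_def by (auto intro: partial_commute)
  show "partial i (partial j (partial k f)) = partial i (partial k (partial j f))"
    using C3_partial2_commute[OF assms, of j k] by simp
qed

lemma C3_partial3_sorted:
  assumes "C3 f"
  shows "partial 1 (partial 2 (partial 1 f)) = partial 1 (partial 1 (partial 2 f))"
    and "partial 2 (partial 1 (partial 1 f)) = partial 1 (partial 1 (partial 2 f))"
    and "partial 2 (partial 1 (partial 2 f)) = partial 1 (partial 2 (partial 2 f))"
    and "partial 2 (partial 2 (partial 1 f)) = partial 1 (partial 2 (partial 2 f))"
  using C3_partial3_commute[OF assms] by metis+

lemma invertible_matrix_inv:
  fixes A :: "'a::field^'n^'n"
  assumes "invertible A"
  shows "A ** matrix_inv A = mat 1" and "matrix_inv A ** A = mat 1"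
  using assms someI_ex[of "\<lambda>A'. A ** A' = mat 1 \<and> A' ** A = mat 1"]
  unfolding invertible_def matrix_inv_def by auto

lemma matrix_inv_unique:
  fixes A B :: "'a::field^'n^'n"
  assumes "A ** B = mat 1" and "B ** A = mat 1"
  shows "matrix_inv A = B"
proof -
  have "invertible A" using assms unfolding invertible_def by blast
  then have "matrix_inv A = matrix_inv A ** (A ** B)"
    using assms by (simp add: matrix_mul_rid)
  also have "\<dots> = B"
    using invertible_matrix_inv[OF \<open>invertible A\<close>] by (simp add: matrix_mul_assoc matrix_mul_lid)
  finally show ?thesis .
qed

lemma inner_real2: "(u::real^2) \<bullet> y = u$1 * y$1 + u$2 * y$2"
  by (simp add: inner_vec_def sum_2)

lemma real2x2_eq_iff:
  "(A::real^2^2) = B \<longleftrightarrow> A$1$1 = B$1$1 \<and> A$1$2 = B$1$2 \<and> A$2$1 = B$2$1 \<and> A$2$2 = B$2$2"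
  by (simp add: vec_eq_iff forall_2)

lemma matrix_matrix_mult_real2x2: "((A::real^2^2) ** B)$i$j = A$i$1 * B$1$j + A$i$2 * B$2$j"
  by (simp add: matrix_matrix_mult_def sum_2)

lemma lin_indep2_iff: "lin_indep2 u v \<longleftrightarrow> u$1 * v$2 \<noteq> u$2 * v$1"
proof
  assume "lin_indep2 u v"
  then have "v \<noteq> 0" and u_notin: "u \<notin> span {v}"
    unfolding lin_indep2_def by (auto simp: independent_insert)
  show "u$1 * v$2 \<noteq> u$2 * v$1"
  proof
    assume det0: "u$1 * v$2 = u$2 * v$1"
    have "u = (if v$1 = 0 then u$2 / v$2 else u$1 / v$1) *\<^sub>R v"
      using det0 \<open>v \<noteq> 0\<close> by (auto simp: vec_eq_iff forall_2 field_simps)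
    then show False
      using u_notin by (metis span_base span_scale singletonI)
  qed
next
  assume det: "u$1 * v$2 \<noteq> u$2 * v$1"
  then have "u \<notin> span {v}"
    by (auto simp: span_singleton)
  moreover have "u \<noteq> v" "v \<noteq> 0" using det by auto
  ultimately show "lin_indep2 u v"
    unfolding lin_indep2_def by (simp add: independent_insert)
qed

lemma lin_indep2_matrix_vector_mult:
  fixes A :: "real^2^2"
  assumes "det A \<noteq> 0" and "lin_indep2 u v"
  shows "lin_indep2 (A *v u) (A *v v)"
proof -
  have "(A *v u)$1 * (A *v v)$2 - (A *v u)$2 * (A *v v)$1 = det A * (u$1 * v$2 - u$2 * v$1)"
    by (simp add: matrix_vector_mult_def sum_2 det_2 algebra_simps)
  then show ?thesis
    using assms unfolding lin_indep2_iff by auto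
qed

lemma AB_eq_0_iff:
  assumes "invertible (hess f th)" and "h > 0" and "Bdq 2 2 G \<noteq> 0"
  shows "AB f th G h P = 0 \<longleftrightarrow> grad_QLap (Qmat P) f th = 0"
proof -
  have "matrix_inv (hess f th) *v g = 0 \<longleftrightarrow> g = 0" for g
  proof
    assume "matrix_inv (hess f th) *v g = 0"
    then have "(hess f th ** matrix_inv (hess f th)) *v g = 0"
      by (metis matrix_vector_mul_assoc matrix_vector_mult_0_right)
    then show "g = 0" using invertible_matrix_inv(1)[OF assms(1)] by simp
  qed simp
  then show ?thesis
    unfolding AB_def Let_def using assms(2,3) by (simp add: Gamma_numeral)
qed

definition cubic_form :: "real \<Rightarrow> real \<Rightarrow> real \<Rightarrow> real \<Rightarrow> real^2 \<Rightarrow> real" where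
  "cubic_form a b c d y = (a * y$1^3 + 3 * b * y$1^2 * y$2 + 3 * c * y$1 * y$2^2 + d * y$2^3) / 6"

text \<open>The linear form \<open>\<nabla>\<^sup>T Q \<nabla> (cubic_form a b c d)\<close> vanishes, coefficient by coefficient.\<close>

definition cubic_Q_harmonic :: "real^2^2 \<Rightarrow> real \<Rightarrow> real \<Rightarrow> real \<Rightarrow> real \<Rightarrow> bool" where
  "cubic_Q_harmonic Q a b c d \<longleftrightarrow>
     Q$1$1 * a + (Q$1$2 + Q$2$1) * b + Q$2$2 * c = 0 \<and>
     Q$1$1 * b + (Q$1$2 + Q$2$1) * c + Q$2$2 * d = 0"

definition distinct_linear_factors :: "(real^2 \<Rightarrow> real) \<Rightarrow> bool" where
  "distinct_linear_factors C \<longleftrightarrow>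
     (\<exists>u v w. lin_indep2 u v \<and> lin_indep2 u w \<and> lin_indep2 v w \<and>
        (\<forall>y. C y = (u \<bullet> y) * (v \<bullet> y) * (w \<bullet> y)))"

lemma taylor3_eq_cubic_form:
  assumes "C3 f"
  shows "taylor3 f th x = cubic_form
    (partial 1 (partial 1 (partial 1 f)) th) (partial 1 (partial 1 (partial 2 f)) th)
    (partial 1 (partial 2 (partial 2 f)) th) (partial 2 (partial 2 (partial 2 f)) th) (x - th)"
  using C3_partial3_sorted[OF assms]
  unfolding taylor3_def cubic_form_def sum_2
  by (simp add: algebra_simps power2_eq_square power3_eq_cube)

lemma grad_QLap_eq_0_iff:
  assumes "C3 f"
  shows "grad_QLap Q f th = 0 \<longleftrightarrow> cubic_Q_harmonic Q
    (partial 1 (partial 1 (partial 1 f)) th) (partial 1 (partial 1 (partial 2 f)) th)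
    (partial 1 (partial 2 (partial 2 f)) th) (partial 2 (partial 2 (partial 2 f)) th)"
  using C3_partial3_sorted[OF assms]
  unfolding grad_QLap_def cubic_Q_harmonic_def vec_eq_iff forall_2 sum_2
  by (simp add: algebra_simps)

lemma cubic_form_eq_0_iff:
  "(\<forall>y. cubic_form a b c d y = 0) \<longleftrightarrow> a = 0 \<and> b = 0 \<and> c = 0 \<and> d = 0"
proof
  assume zero: "\<forall>y. cubic_form a b c d y = 0"
  have "a = 0" "d = 0" "a + 3*b + 3*c + d = 0" "a - 3*b + 3*c - d = 0"
    using zero[rule_format, of "vector [1, 0]"] zero[rule_format, of "vector [0, 1]"]
      zero[rule_format, of "vector [1, 1]"] zero[rule_format, of "vector [1, -1]"]
    by (simp_all add: cubic_form_def)
  then show "a = 0 \<and> b = 0 \<and> c = 0 \<and> d = 0" by linarith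
qed (simp add: cubic_form_def)

lemma distinct_linear_factors_compose_matrix:
  fixes P :: "real^2^2"
  assumes "det P \<noteq> 0" and "distinct_linear_factors C"
  shows "distinct_linear_factors (\<lambda>y. C (P *v y))"
proof -
  obtain u v w where indep: "lin_indep2 u v" "lin_indep2 u w" "lin_indep2 v w"
    and C: "\<And>y. C y = (u \<bullet> y) * (v \<bullet> y) * (w \<bullet> y)"
    using assms(2) unfolding distinct_linear_factors_def by blast
  have "det (transpose P) \<noteq> 0" using assms(1) by (simp add: det_transpose)
  moreover have "l \<bullet> (P *v y) = (transpose P *v l) \<bullet> y" for l y
    by (simp add: dot_lmul_matrix)
  ultimately show ?thesis
    unfolding distinct_linear_factors_def C using indep
    by (metis lin_indep2_matrix_vector_mult)
qed

lemma cubic_form_coeffs_of_product: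
  assumes "\<forall>y. cubic_form a b c d y = (u \<bullet> y) * (v \<bullet> y) * (w \<bullet> y)"
  shows "a = 6 * (u$1 * v$1 * w$1)"
    and "b = 2 * (u$1 * v$1 * w$2 + u$1 * v$2 * w$1 + u$2 * v$1 * w$1)"
    and "c = 2 * (u$1 * v$2 * w$2 + u$2 * v$1 * w$2 + u$2 * v$2 * w$1)"
    and "d = 6 * (u$2 * v$2 * w$2)"
proof -
  have "a = 6 * (u$1 * v$1 * w$1)" "d = 6 * (u$2 * v$2 * w$2)"
    "a + 3*b + 3*c + d = 6 * ((u$1 + u$2) * (v$1 + v$2) * (w$1 + w$2))"
    "a - 3*b + 3*c - d = 6 * ((u$1 - u$2) * (v$1 - v$2) * (w$1 - w$2))"
    using assms[rule_format, of "vector [1, 0]"] assms[rule_format, of "vector [0, 1]"]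
      assms[rule_format, of "vector [1, 1]"] assms[rule_format, of "vector [1, -1]"]
    by (simp_all add: cubic_form_def inner_real2)
  then show "a = 6 * (u$1 * v$1 * w$1)"
    and "b = 2 * (u$1 * v$1 * w$2 + u$1 * v$2 * w$1 + u$2 * v$1 * w$1)"
    and "c = 2 * (u$1 * v$2 * w$2 + u$2 * v$1 * w$2 + u$2 * v$2 * w$1)"
    and "d = 6 * (u$2 * v$2 * w$2)"
    by (simp_all add: algebra_simps)
qed

text \<open>The witness \<open>P\<close> is the inverse of the lower triangular Cholesky factor of \<open>Q\<close>.\<close>

lemma Qmat_onto_pos_definite:
  assumes "p > 0" and "p * w - r\<^sup>2 = 1"
  obtains P where "det P = 1" and "Qmat P = vector [vector [p, r], vector [r, w]]"
proof
  define t where "t = sqrt p"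
  have t: "t > 0" "t\<^sup>2 = p" unfolding t_def using assms(1) by simp_all
  define P where "P = (vector [vector [1/t, 0], vector [-r/t, t]] :: real^2^2)"
  define L where "L = (vector [vector [t, 0], vector [r/t, 1/t]] :: real^2^2)"
  have "P ** L = mat 1" "L ** P = mat 1"
    unfolding real2x2_eq_iff matrix_matrix_mult_real2x2 P_def L_def
    using t by (simp_all add: mat_def field_simps)
  then have L: "matrix_inv P = L" by (rule matrix_inv_unique)
  have w: "w = (r\<^sup>2 + 1) / t\<^sup>2" using assms t by (simp add: field_simps)
  show "Qmat P = vector [vector [p, r], vector [r, w]]"
    unfolding Qmat_def L w real2x2_eq_iff matrix_matrix_mult_real2x2 L_def
    using t assms(1) by (simp add: transpose_def field_simps power2_eq_square)
  show "det P = 1" unfolding det_2 P_def using t by simp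
qed

text \<open>Whatever the cubic, its Hessian covariant \<open>(b d - c\<^sup>2, (b c - a d) / 2, a c - b\<^sup>2)\<close>
  satisfies both harmonicity equations identically; when it is definite it can be normalised
  to a positive definite \<open>Q\<close> of determinant one.\<close>

lemma exists_Qmat_harmonic_if_hessian_covariant_pos:
  assumes "4 * (b*d - c\<^sup>2) * (a*c - b\<^sup>2) - (b*c - a*d)\<^sup>2 > 0"
  obtains P where "det P = 1" and "cubic_Q_harmonic (Qmat P) a b c d"
proof -
  define p0 r0 w0 where "p0 = b*d - c\<^sup>2" and "r0 = (b*c - a*d) / 2" and "w0 = a*c - b\<^sup>2"
  have pos: "p0 * w0 - r0\<^sup>2 > 0"
    using assms unfolding p0_def r0_def w0_def by (simp add: power_divide algebra_simps)
  then have "p0 \<noteq> 0" by (smt (verit) mult_eq_0_iff zero_le_power2)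
  define k where "k = sgn p0 / sqrt (p0 * w0 - r0\<^sup>2)"
  have "k * p0 > 0"
    unfolding k_def using pos \<open>p0 \<noteq> 0\<close> by (simp add: sgn_if field_simps)
  have "k\<^sup>2 * (p0 * w0 - r0\<^sup>2) = 1"
    unfolding k_def using pos \<open>p0 \<noteq> 0\<close> by (simp add: power_divide sgn_if)
  then have "(k * p0) * (k * w0) - (k * r0)\<^sup>2 = 1"
    by (simp add: algebra_simps power2_eq_square)
  with \<open>k * p0 > 0\<close> obtain P where P: "det P = 1"
    "Qmat P = vector [vector [k * p0, k * r0], vector [k * r0, k * w0]]"
    by (rule Qmat_onto_pos_definite)
  have "cubic_Q_harmonic (Qmat P) a b c d"
    unfolding P(2) cubic_Q_harmonic_def p0_def r0_def w0_def
    by (simp add: algebra_simps power2_eq_square)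
  with P(1) show thesis by (rule that)
qed

lemma hessian_covariant_of_product:
  assumes "\<forall>y. cubic_form a b c d y = (u \<bullet> y) * (v \<bullet> y) * (w \<bullet> y)"
  shows "4 * (b*d - c\<^sup>2) * (a*c - b\<^sup>2) - (b*c - a*d)\<^sup>2
    = 48 * ((u$1 * v$2 - u$2 * v$1) * (u$1 * w$2 - u$2 * w$1) * (v$1 * w$2 - v$2 * w$1))\<^sup>2"
  unfolding cubic_form_coeffs_of_product[OF assms]
  by (simp add: algebra_simps power2_eq_square)

lemma exists_Qmat_harmonic_if_distinct_linear_factors:
  assumes "distinct_linear_factors (cubic_form a b c d)"
  obtains P where "det P = 1" and "cubic_Q_harmonic (Qmat P) a b c d"
proof -
  obtain u v w where indep: "lin_indep2 u v" "lin_indep2 u w" "lin_indep2 v w"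
    and prod: "\<forall>y. cubic_form a b c d y = (u \<bullet> y) * (v \<bullet> y) * (w \<bullet> y)"
    using assms unfolding distinct_linear_factors_def by blast
  have "(u$1 * v$2 - u$2 * v$1) * (u$1 * w$2 - u$2 * w$1) * (v$1 * w$2 - v$2 * w$1) \<noteq> 0"
    using indep unfolding lin_indep2_iff by simp
  then have "4 * (b*d - c\<^sup>2) * (a*c - b\<^sup>2) - (b*c - a*d)\<^sup>2 > 0"
    unfolding hessian_covariant_of_product[OF prod] by simp
  then show thesis
    using exists_Qmat_harmonic_if_hessian_covariant_pos that by blast
qed

text \<open>In coordinates \<open>y = M z\<close> with \<open>Q = M M\<^sup>T\<close> the operator \<open>\<nabla>\<^sup>T Q \<nabla>\<close> becomes the Laplacian,
  and a harmonic binary cubic is \<open>Re ((A + i D) (z\<^sub>1 + i z\<^sub>2)\<^sup>3) / 6\<close>.\<close>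

lemma cubic_form_in_harmonic_coordinates:
  fixes M :: "real^2^2"
  assumes "cubic_Q_harmonic (M ** transpose M) a b c d"
  defines "A \<equiv> 6 * cubic_form a b c d (column 1 M)"
    and "D \<equiv> 6 * cubic_form a b c d (column 2 M)"
  shows "cubic_form a b c d (M *v z) = cubic_form A (-D) (-A) D z"
proof -
  define m11 m12 m21 m22 where "m11 = M$1$1" and "m12 = M$1$2" and "m21 = M$2$1" and "m22 = M$2$2"
  have Mz: "(M *v z)$1 = m11 * z$1 + m12 * z$2" "(M *v z)$2 = m21 * z$1 + m22 * z$2"
    unfolding m11_def m12_def m21_def m22_def by (simp_all add: matrix_vector_mult_def sum_2)
  have AD: "A = a * m11^3 + 3 * b * m11\<^sup>2 * m21 + 3 * c * m11 * m21\<^sup>2 + d * m21^3"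
    "D = a * m12^3 + 3 * b * m12\<^sup>2 * m22 + 3 * c * m12 * m22\<^sup>2 + d * m22^3"
    unfolding A_def D_def cubic_form_def column_def m11_def m12_def m21_def m22_def by simp_all
  define h1 h2 where "h1 = (m11\<^sup>2 + m12\<^sup>2) * a + 2 * (m11*m21 + m12*m22) * b + (m21\<^sup>2 + m22\<^sup>2) * c"
    and "h2 = (m11\<^sup>2 + m12\<^sup>2) * b + 2 * (m11*m21 + m12*m22) * c + (m21\<^sup>2 + m22\<^sup>2) * d"
  have "h1 = 0" "h2 = 0"
    using assms(1) unfolding cubic_Q_harmonic_def matrix_matrix_mult_real2x2 h1_def h2_def
      m11_def m12_def m21_def m22_def
    by (simp_all add: transpose_def power2_eq_square algebra_simps)
  have "6 * cubic_form a b c d (M *v z)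
     = a * (m11 * z$1 + m12 * z$2)^3 + 3 * b * (m11 * z$1 + m12 * z$2)\<^sup>2 * (m21 * z$1 + m22 * z$2)
       + 3 * c * (m11 * z$1 + m12 * z$2) * (m21 * z$1 + m22 * z$2)\<^sup>2 + d * (m21 * z$1 + m22 * z$2)^3"
    unfolding cubic_form_def Mz by simp
  also have "\<dots> = A * z$1^3 + 3 * (-D) * (z$1)\<^sup>2 * z$2 + 3 * (-A) * z$1 * (z$2)\<^sup>2 + D * z$2^3
       + 3 * (m12 * h1 + m22 * h2) * (z$1)\<^sup>2 * z$2 + 3 * (m11 * h1 + m21 * h2) * z$1 * (z$2)\<^sup>2"
    unfolding AD h1_def h2_def by (simp add: algebra_simps power2_eq_square power3_eq_cube)
  also have "\<dots> = 6 * cubic_form A (-D) (-A) D z"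
    unfolding cubic_form_def \<open>h1 = 0\<close> \<open>h2 = 0\<close> by simp
  finally show ?thesis by simp
qed

text \<open>The three factors come from the three cube roots of \<open>A + i D\<close>: with
  \<open>\<omega>\<^sup>3 = A + i D\<close> and \<open>X + i Y = \<omega> (z\<^sub>1 + i z\<^sub>2)\<close> the cubic is
  \<open>(X\<^sup>3 - 3 X Y\<^sup>2) / 6 = X (X - \<surd>3 Y) (X + \<surd>3 Y) / 6\<close>.\<close>

lemma distinct_linear_factors_harmonic_cubic:
  assumes "A \<noteq> 0 \<or> D \<noteq> 0"
  shows "distinct_linear_factors (cubic_form A (-D) (-A) D)"
proof -
  have "Complex A D \<noteq> 0" using assms by (simp add: complex_eq_iff)
  then obtain \<omega> where "\<omega> \<noteq> 0" and \<omega>: "Complex A D = \<omega> ^ 3"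
    by (rule exists_complex_root_nonzero[where n = 3]) simp_all
  define \<rho> \<sigma> where "\<rho> = Re \<omega>" and "\<sigma> = Im \<omega>"
  have "\<omega> = Complex \<rho> \<sigma>" unfolding \<rho>_def \<sigma>_def by simp
  then have AD: "A = \<rho>^3 - 3 * \<rho> * \<sigma>\<^sup>2" "D = 3 * \<rho>\<^sup>2 * \<sigma> - \<sigma>^3"
    using \<omega> by (simp_all add: complex_eq_iff power3_eq_cube power2_eq_square algebra_simps)
  have "\<rho>\<^sup>2 + \<sigma>\<^sup>2 > 0"
    using \<open>\<omega> \<noteq> 0\<close> unfolding \<rho>_def \<sigma>_def by (simp add: complex_eq_iff sum_power2_gt_zero_iff)
  define s where "s = sqrt 3"
  have s: "s > 0" "s\<^sup>2 = 3" unfolding s_def by simp_all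
  define q where "q = s * (\<rho>\<^sup>2 + \<sigma>\<^sup>2)"
  have "q > 0" unfolding q_def using s \<open>\<rho>\<^sup>2 + \<sigma>\<^sup>2 > 0\<close> by simp
  define u v w where "u = (vector [\<rho> / 6, - \<sigma> / 6] :: real^2)"
    and "v = (vector [\<rho> - s * \<sigma>, - \<sigma> - s * \<rho>] :: real^2)"
    and "w = (vector [\<rho> + s * \<sigma>, - \<sigma> + s * \<rho>] :: real^2)"
  have "u$1 * v$2 - u$2 * v$1 = - q / 6"
    and "u$1 * w$2 - u$2 * w$1 = q / 6"
    and "v$1 * w$2 - v$2 * w$1 = 2 * q"
    unfolding u_def v_def w_def q_def by (simp_all add: field_simps power2_eq_square)
  then have "lin_indep2 u v" "lin_indep2 u w" "lin_indep2 v w"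
    unfolding lin_indep2_iff using \<open>q > 0\<close> by linarith+
  moreover have "cubic_form A (-D) (-A) D z = (u \<bullet> z) * (v \<bullet> z) * (w \<bullet> z)" for z
  proof -
    define X Y where "X = \<rho> * z$1 - \<sigma> * z$2" and "Y = \<sigma> * z$1 + \<rho> * z$2"
    have "cubic_form A (-D) (-A) D z = (X^3 - 3 * X * Y\<^sup>2) / 6"
      unfolding cubic_form_def AD X_def Y_def
      by (simp add: algebra_simps power2_eq_square power3_eq_cube)
    also have "\<dots> = X / 6 * (X\<^sup>2 - s\<^sup>2 * Y\<^sup>2)"
      using s(2) by (simp add: field_simps power2_eq_square power3_eq_cube)
    also have "\<dots> = (X / 6) * (X - s * Y) * (X + s * Y)"
      by (simp add: algebra_simps power2_eq_square)
    also have "\<dots> = (u \<bullet> z) * (v \<bullet> z) * (w \<bullet> z)"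
    proof -
      have uz: "u \<bullet> z = X / 6" and vz: "v \<bullet> z = X - s * Y" and wz: "w \<bullet> z = X + s * Y"
        unfolding u_def v_def w_def X_def Y_def inner_real2 by (simp_all add: algebra_simps)
      show ?thesis unfolding uz vz wz ..
    qed
    finally show ?thesis .
  qed
  ultimately show ?thesis
    unfolding distinct_linear_factors_def by blast
qed

lemma distinct_linear_factors_if_Qmat_harmonic:
  assumes "det P \<noteq> 0" and "cubic_Q_harmonic (Qmat P) a b c d"
    and "\<exists>y. cubic_form a b c d y \<noteq> 0"
  shows "distinct_linear_factors (cubic_form a b c d)"
proof -
  define M where "M = matrix_inv P"
  define A D where "A = 6 * cubic_form a b c d (column 1 M)"
    and "D = 6 * cubic_form a b c d (column 2 M)"
  have "M ** P = mat 1"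
    using invertible_matrix_inv(2) assms(1) unfolding M_def invertible_det_nz by blast
  then have "M *v (P *v y) = y" for y by (simp add: matrix_vector_mul_assoc)
  moreover have "cubic_form a b c d (M *v z) = cubic_form A (-D) (-A) D z" for z
    using cubic_form_in_harmonic_coordinates assms(2)
    unfolding A_def D_def M_def Qmat_def by blast
  ultimately have pullback: "cubic_form a b c d = (\<lambda>y. cubic_form A (-D) (-A) D (P *v y))"
    by metis
  have "A \<noteq> 0 \<or> D \<noteq> 0"
    using assms(3) unfolding pullback by (auto simp: cubic_form_def)
  then show ?thesis
    unfolding pullback
    by (intro distinct_linear_factors_compose_matrix assms(1) distinct_linear_factors_harmonic_cubic)
qed

theorem proposition6:
  fixes f :: "real^2 \<Rightarrow> real" and th :: "real^2"
    and G :: "real \<Rightarrow> real" and h :: real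
  assumes smooth: "C3 f"
    and nonneg: "\<forall>x. 0 \<le> f x"
    and integrable: "f integrable_on UNIV"
    and density: "integral UNIV f = 1"
    and mode: "\<forall>x. x \<noteq> th \<longrightarrow> f x < f th"
    and hess_nonsing: "invertible (hess f th)"
    and G_int: "(\<lambda>x. x ^ 3 * G x) integrable_on {0..}"
    and B_nz: "Bdq 2 2 G \<noteq> 0"
    and h_pos: "h > 0"
  shows
    "((\<forall>x. taylor3 f th x = 0) \<longrightarrow>
        (\<forall>P. \<bar>det P\<bar> = 1 \<longrightarrow> AB f th G h P = 0))
   \<and> ((\<exists>a1 a2 a3. lin_indep2 a1 a2 \<and> lin_indep2 a1 a3 \<and> lin_indep2 a2 a3 \<and>
          (\<forall>x. taylor3 f th x = (a1 \<bullet> (x - th)) * (a2 \<bullet> (x - th)) * (a3 \<bullet> (x - th)))) \<longrightarrow>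
        (\<exists>P. \<bar>det P\<bar> = 1 \<and> AB f th G h P = 0))
   \<and> ((\<not> (\<forall>x. taylor3 f th x = 0) \<and>
        \<not> (\<exists>a1 a2 a3. lin_indep2 a1 a2 \<and> lin_indep2 a1 a3 \<and> lin_indep2 a2 a3 \<and>
          (\<forall>x. taylor3 f th x = (a1 \<bullet> (x - th)) * (a2 \<bullet> (x - th)) * (a3 \<bullet> (x - th))))) \<longrightarrow>
        (\<forall>P. \<bar>det P\<bar> = 1 \<longrightarrow> AB f th G h P \<noteq> 0))"
proof -
  define a b c d where "a = partial 1 (partial 1 (partial 1 f)) th"
    and "b = partial 1 (partial 1 (partial 2 f)) th" and "c = partial 1 (partial 2 (partial 2 f)) th"
    and "d = partial 2 (partial 2 (partial 2 f)) th"
  have taylor: "taylor3 f th x = cubic_form a b c d (x - th)" for x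
    unfolding a_def b_def c_def d_def by (rule taylor3_eq_cubic_form[OF smooth])
  have AB_0: "AB f th G h P = 0 \<longleftrightarrow> cubic_Q_harmonic (Qmat P) a b c d" for P
    unfolding AB_eq_0_iff[OF hess_nonsing h_pos B_nz] a_def b_def c_def d_def
    by (rule grad_QLap_eq_0_iff[OF smooth])
  have zero: "(\<forall>x. taylor3 f th x = 0) \<longleftrightarrow> a = 0 \<and> b = 0 \<and> c = 0 \<and> d = 0"
    unfolding taylor cubic_form_eq_0_iff[symmetric] by (metis add_diff_cancel_right')
  have "(\<forall>x. taylor3 f th x = (a1 \<bullet> (x - th)) * (a2 \<bullet> (x - th)) * (a3 \<bullet> (x - th)))
      \<longleftrightarrow> (\<forall>y. cubic_form a b c d y = (a1 \<bullet> y) * (a2 \<bullet> y) * (a3 \<bullet> y))" for a1 a2 a3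
    unfolding taylor by (metis add_diff_cancel_right')
  then have factors: "(\<exists>a1 a2 a3. lin_indep2 a1 a2 \<and> lin_indep2 a1 a3 \<and> lin_indep2 a2 a3 \<and>
      (\<forall>x. taylor3 f th x = (a1 \<bullet> (x - th)) * (a2 \<bullet> (x - th)) * (a3 \<bullet> (x - th))))
    \<longleftrightarrow> distinct_linear_factors (cubic_form a b c d)"
    unfolding distinct_linear_factors_def by simp
  show ?thesis
    unfolding zero factors AB_0
  proof (intro conjI impI allI)
    show "cubic_Q_harmonic (Qmat P) a b c d" if "a = 0 \<and> b = 0 \<and> c = 0 \<and> d = 0" for P
      using that unfolding cubic_Q_harmonic_def by simp
  next
    assume "distinct_linear_factors (cubic_form a b c d)"
    then obtain P where "det P = 1" and "cubic_Q_harmonic (Qmat P) a b c d"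
      by (rule exists_Qmat_harmonic_if_distinct_linear_factors)
    then have "\<bar>det P\<bar> = 1 \<and> cubic_Q_harmonic (Qmat P) a b c d" by simp
    then show "\<exists>P. \<bar>det P\<bar> = 1 \<and> cubic_Q_harmonic (Qmat P) a b c d" by blast
  next
    fix P :: "real^2^2"
    assume "\<not> (a = 0 \<and> b = 0 \<and> c = 0 \<and> d = 0) \<and> \<not> distinct_linear_factors (cubic_form a b c d)"
      and "\<bar>det P\<bar> = 1"
    moreover have "det P \<noteq> 0" using \<open>\<bar>det P\<bar> = 1\<close> by auto
    ultimately show "\<not> cubic_Q_harmonic (Qmat P) a b c d"
      using distinct_linear_factors_if_Qmat_harmonic[of P a b c d]
      unfolding cubic_form_eq_0_iff[symmetric] by auto
  qed
qed

end
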